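(* Let $\mathcal{A}$ be a finite set of arms, $1\le B\le|\mathcal{A}|$, and fix a sequence of cost functions $c_1,\dots,c_T:\mathcal{A}\to[0,1]$. For $t\ge 0$ let $a_t^{*,j}$ be the $j$-th lowest cumulative cost arm after the first $t$ rounds, i.e. ordered by $\sum_{s=1}^t c_s(a)$ with ties broken arbitrarily, and let $S_t^*:=\{a_{t-1}^{*,j}: j\in[B]\}$ be the set of the $B$ lowest cumulative cost arms at the end of round $t-1$. For $i\in\{0,\dots,T\}$ define \[R_i:=\sum_{t=1}^i c_t(S_t^* )-\min_{a^*\in\mathcal{A}}\sum_{t=1}^i c_t(a^* ),\] where $c_t(S):=\min_{a\in S}c_t(a)$. Then for each $i\in[T]$, \[R_i\le\sum_{t=1}^i\mathbb{1}[a_t^{*,1}\notin S_t^*]\quad\text{and}\quad R_i-R_{i-1}\le\mathbb{1}[a_i^{*,1}\notin S_i^*].\] *)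

theory Defs
  imports Complex_Main
begin

definition cum_cost :: "(nat \<Rightarrow> 'a \<Rightarrow> real) \<Rightarrow> nat \<Rightarrow> 'a \<Rightarrow> real" where
  "cum_cost c t a = (\<Sum>s = 1..t. c s a)"

definition set_cost :: "(nat \<Rightarrow> 'a \<Rightarrow> real) \<Rightarrow> nat \<Rightarrow> 'a set \<Rightarrow> real" where
  "set_cost c t S = Min (c t ` S)"

definition is_ranking :: "'a set \<Rightarrow> (nat \<Rightarrow> 'a \<Rightarrow> real) \<Rightarrow> nat \<Rightarrow> (nat \<Rightarrow> 'a) \<Rightarrow> bool" where
  "is_ranking A c t r \<longleftrightarrow> bij_betw r {1..card A} A \<and>
     (\<forall>j\<in>{1..card A}. \<forall>k\<in>{1..card A}. j \<le> k \<longrightarrow> cum_cost c t (r j) \<le> cum_cost c t (r k))"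

definition S_star :: "(nat \<Rightarrow> nat \<Rightarrow> 'a) \<Rightarrow> nat \<Rightarrow> nat \<Rightarrow> 'a set" where
  "S_star rk B t = rk (t - 1) ` {1..B}"

definition regret_R :: "'a set \<Rightarrow> (nat \<Rightarrow> 'a \<Rightarrow> real) \<Rightarrow> (nat \<Rightarrow> nat \<Rightarrow> 'a) \<Rightarrow> nat \<Rightarrow> nat \<Rightarrow> real" where
  "regret_R A c rk B i = (\<Sum>t = 1..i. set_cost c t (S_star rk B t)) - Min (cum_cost c i ` A)"

end

theory Submission
  imports Defs
begin

text \<open>From round \<open>t - 1\<close> to round \<open>t\<close> the minimal cumulative cost grows by at least
  \<open>c t\<close> evaluated at the new leader \<open>rk t 1\<close>. Hence \<open>R t - R (t - 1)\<close> is at most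
  \<open>c t (S t) - c t (rk t 1)\<close>, which is \<open>\<le> 0\<close> when the leader lies in \<open>S t\<close> and \<open>\<le> 1\<close>
  otherwise, since costs lie in \<open>[0, 1]\<close>. Telescoping from \<open>R 0 = 0\<close> gives the cumulative bound.\<close>

lemma cum_cost_0 [simp]: "cum_cost c 0 a = 0"
  unfolding cum_cost_def by simp

lemma cum_cost_Suc: "cum_cost c (Suc t) a = cum_cost c t a + c (Suc t) a"
  unfolding cum_cost_def by simp

lemma is_ranking_finite:
  assumes "is_ranking A c t r" "A \<noteq> {}"
  shows "finite A"
  using assms card_eq_0_iff unfolding is_ranking_def bij_betw_def by fastforce

lemma is_ranking_image_subset:
  assumes "is_ranking A c t r" "B \<le> card A"
  shows "r ` {1..B} \<subseteq> A"
  using assms unfolding is_ranking_def bij_betw_def by auto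

lemma is_ranking_first_is_Min:
  assumes "is_ranking A c t r" "A \<noteq> {}"
  shows "r 1 \<in> A" and "Min (cum_cost c t ` A) = cum_cost c t (r 1)"
proof -
  have bij: "bij_betw r {1..card A} A"
    and sorted: "\<And>j k. j \<in> {1..card A} \<Longrightarrow> k \<in> {1..card A} \<Longrightarrow> j \<le> k \<Longrightarrow>
        cum_cost c t (r j) \<le> cum_cost c t (r k)"
    using assms(1) unfolding is_ranking_def by auto
  have fin: "finite A" using is_ranking_finite[OF assms] .
  then have one: "1 \<in> {1..card A}" using assms(2) by (simp add: Suc_leI card_gt_0_iff)
  then show first: "r 1 \<in> A" using bij by (auto simp: bij_betw_def)
  have "cum_cost c t (r 1) \<le> cum_cost c t a" if "a \<in> A" for a
  proof -
    obtain j where "j \<in> {1..card A}" "a = r j"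
      using bij \<open>a \<in> A\<close> by (metis bij_betw_def imageE)
    then show ?thesis using sorted one by simp
  qed
  then show "Min (cum_cost c t ` A) = cum_cost c t (r 1)"
    using fin first by (intro Min_eqI) auto
qed

lemma Min_cum_cost_Suc_ge:
  assumes "is_ranking A c (Suc t) r" "A \<noteq> {}"
  shows "Min (cum_cost c t ` A) + c (Suc t) (r 1) \<le> Min (cum_cost c (Suc t) ` A)"
proof -
  have "Min (cum_cost c t ` A) \<le> cum_cost c t (r 1)"
    using is_ranking_first_is_Min(1)[OF assms] is_ranking_finite[OF assms] by simp
  then show ?thesis
    using is_ranking_first_is_Min(2)[OF assms] by (simp add: cum_cost_Suc)
qed

lemma set_cost_le: "finite S \<Longrightarrow> a \<in> S \<Longrightarrow> set_cost c t S \<le> c t a"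
  unfolding set_cost_def by simp

lemma set_cost_diff_le_of_bool:
  assumes "finite S" "S \<noteq> {}" "\<And>a. a \<in> S \<Longrightarrow> c t a \<le> 1" "0 \<le> c t b"
  shows "set_cost c t S - c t b \<le> of_bool (b \<notin> S)"
proof (cases "b \<in> S")
  case True
  then show ?thesis using set_cost_le[OF assms(1)] by simp
next
  case False
  obtain a where "a \<in> S" using assms(2) by blast
  then have "set_cost c t S \<le> 1" using set_cost_le[OF assms(1)] assms(3) by (meson order_trans)
  then show ?thesis using False assms(4) by simp
qed

lemma regret_R_Suc_diff_le:
  assumes "1 \<le> B" "B \<le> card A"
    and "is_ranking A c t (rk t)" "is_ranking A c (Suc t) (rk (Suc t))"
    and "\<And>a. a \<in> A \<Longrightarrow> 0 \<le> c (Suc t) a \<and> c (Suc t) a \<le> 1"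
  shows "regret_R A c rk B (Suc t) - regret_R A c rk B t
    \<le> of_bool (rk (Suc t) 1 \<notin> S_star rk B (Suc t))"
proof -
  let ?S = "S_star rk B (Suc t)" and ?leader = "rk (Suc t) 1"
  have "A \<noteq> {}" using assms(1,2) by auto
  have S: "finite ?S" "?S \<noteq> {}" "?S \<subseteq> A"
    using assms(1) is_ranking_image_subset[OF assms(3,2)] by (auto simp: S_star_def)
  have "regret_R A c rk B (Suc t) - regret_R A c rk B t
      = set_cost c (Suc t) ?S - (Min (cum_cost c (Suc t) ` A) - Min (cum_cost c t ` A))"
    unfolding regret_R_def by simp
  also have "\<dots> \<le> set_cost c (Suc t) ?S - c (Suc t) ?leader"
    using Min_cum_cost_Suc_ge[OF assms(4) \<open>A \<noteq> {}\<close>] by simp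
  also have "\<dots> \<le> of_bool (?leader \<notin> ?S)"
    using S is_ranking_first_is_Min(1)[OF assms(4) \<open>A \<noteq> {}\<close>] assms(5)
    by (intro set_cost_diff_le_of_bool) auto
  finally show ?thesis .
qed

lemma le_sum_of_increments_le:
  fixes f g :: "nat \<Rightarrow> 'b :: ordered_ab_group_add"
  assumes "f 0 = 0" "\<And>t. t \<in> {1..n} \<Longrightarrow> f t - f (t - 1) \<le> g t"
  shows "f n \<le> (\<Sum>t = 1..n. g t)"
  using assms(2)
proof (induction n)
  case (Suc n)
  have "f (Suc n) \<le> f n + g (Suc n)"
    using Suc.prems[of "Suc n"] by (simp add: algebra_simps)
  also have "\<dots> \<le> (\<Sum>t = 1..n. g t) + g (Suc n)"
    using Suc by simp
  finally show ?case by simp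
qed (simp add: assms(1))

theorem lemma3:
  fixes A :: "'a set" and B T i :: nat and c :: "nat \<Rightarrow> 'a \<Rightarrow> real"
    and rk :: "nat \<Rightarrow> nat \<Rightarrow> 'a"
  assumes "finite A"
    and "1 \<le> B" and "B \<le> card A"
    and "\<And>t a. t \<in> {1..T} \<Longrightarrow> a \<in> A \<Longrightarrow> 0 \<le> c t a \<and> c t a \<le> 1"
    and "\<And>t. t \<le> T \<Longrightarrow> is_ranking A c t (rk t)"
    and "i \<in> {1..T}"
  shows "regret_R A c rk B i \<le> (\<Sum>t = 1..i. of_bool (rk t 1 \<notin> S_star rk B t))
     \<and> regret_R A c rk B i - regret_R A c rk B (i - 1) \<le> of_bool (rk i 1 \<notin> S_star rk B i)"
proof -
  have increment: "regret_R A c rk B t - regret_R A c rk B (t - 1)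
      \<le> of_bool (rk t 1 \<notin> S_star rk B t)" if t: "t \<in> {1..T}" for t
  proof -
    obtain s where s: "t = Suc s" using t by (cases t) auto
    have "is_ranking A c s (rk s)" "is_ranking A c (Suc s) (rk (Suc s))"
      using t s assms(5) by auto
    moreover have "\<And>a. a \<in> A \<Longrightarrow> 0 \<le> c (Suc s) a \<and> c (Suc s) a \<le> 1"
      using t s assms(4) by blast
    ultimately show ?thesis
      using regret_R_Suc_diff_le[OF assms(2,3)] s by simp
  qed
  have "A \<noteq> {}" using assms(2,3) by auto
  then have "regret_R A c rk B 0 = 0"
    by (simp add: regret_R_def image_constant_conv)
  then have "regret_R A c rk B i \<le> (\<Sum>t = 1..i. of_bool (rk t 1 \<notin> S_star rk B t))"
    using increment assms(6) by (intro le_sum_of_increments_le) auto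
  then show ?thesis using increment assms(6) by simp
qed

end
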